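(* Let $G$ and $H$ be graphs without isolated vertices. Then $G$ and $H$ are isomorphic as graphs if and only if $B(G)$ and $B(H)$ are isomorphic as $\mathbb{Z}_2$-posets, i.e. there is an order isomorphism $B(G)\to B(H)$ commuting with the involutions.
   Context: A graph $G$ is a set $V(G)$ together with a symmetric subset $E(G) \subset V(G)\times V(G)$ (undirected, no multiple edges, loops allowed; graphs may be infinite). For $v \in V(G)$, $N(v)=\{w : (v,w)\in E(G)\}$; $v$ is isolated if $N(v)=\emptyset$. The box complex $B(G)$ is the poset of all pairs $(\sigma,\tau)$ of non-empty (possibly infinite) subsets of $V(G)$ with $\sigma\times\tau\subset E(G)$, ordered by $(\sigma,\tau)\le(\sigma',\tau')$ iff $\sigma\subset\sigma'$ and $\tau\subset\tau'$, and equipped with the involution $(\sigma,\tau)\leftrightarrow(\tau,\sigma)$. *)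

theory Defs
  imports Main
begin

text \<open>A graph: vertex set V and a symmetric edge relation E \<subseteq> V \<times> V
  (undirected, loops allowed, possibly infinite).\<close>
definition is_graph :: "'a set \<Rightarrow> ('a \<times> 'a) set \<Rightarrow> bool" where
  "is_graph V E \<longleftrightarrow> E \<subseteq> V \<times> V \<and> sym E"

definition nbhd :: "('a \<times> 'a) set \<Rightarrow> 'a \<Rightarrow> 'a set" where
  "nbhd E v = {w. (v, w) \<in> E}"

definition no_isolated :: "'a set \<Rightarrow> ('a \<times> 'a) set \<Rightarrow> bool" where
  "no_isolated V E \<longleftrightarrow> (\<forall>v\<in>V. nbhd E v \<noteq> {})"

definition graph_iso :: "'a set \<Rightarrow> ('a \<times> 'a) set \<Rightarrow> 'b set \<Rightarrow> ('b \<times> 'b) set \<Rightarrow> bool" where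
  "graph_iso V E V' E' \<longleftrightarrow> (\<exists>f. bij_betw f V V' \<and>
     (\<forall>v\<in>V. \<forall>w\<in>V. (v, w) \<in> E \<longleftrightarrow> (f v, f w) \<in> E'))"

definition box_complex :: "'a set \<Rightarrow> ('a \<times> 'a) set \<Rightarrow> ('a set \<times> 'a set) set" where
  "box_complex V E = {(\<sigma>, \<tau>). \<sigma> \<subseteq> V \<and> \<tau> \<subseteq> V \<and> \<sigma> \<noteq> {} \<and> \<tau> \<noteq> {} \<and> \<sigma> \<times> \<tau> \<subseteq> E}"

definition box_le :: "('a set \<times> 'a set) \<Rightarrow> ('a set \<times> 'a set) \<Rightarrow> bool" where
  "box_le p q \<longleftrightarrow> fst p \<subseteq> fst q \<and> snd p \<subseteq> snd q"

definition box_inv :: "('a set \<times> 'a set) \<Rightarrow> ('a set \<times> 'a set)" where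
  "box_inv p = (snd p, fst p)"

definition z2_poset_iso ::
  "('a set \<times> 'a set) set \<Rightarrow> ('b set \<times> 'b set) set \<Rightarrow> bool" where
  "z2_poset_iso P Q \<longleftrightarrow> (\<exists>F. bij_betw F P Q \<and>
     (\<forall>x\<in>P. \<forall>y\<in>P. box_le x y \<longleftrightarrow> box_le (F x) (F y)) \<and>
     (\<forall>x\<in>P. F (box_inv x) = box_inv (F x)))"

end

theory Submission
  imports Defs
begin

(* Forward direction: a graph isomorphism f acts on B(G) by taking images of both
   components, which is an order isomorphism commuting with the involution; the
   inverse isomorphism gives the inverse map.

   The minimal elements ("atoms") of B(G) are exactly the boxes
       ({v},{w}) of the arcs (v,w) of G.  Two atoms are a "tight pair" when some element
       lies above both and above no other atom; for arcs this happens iff they share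
       their tail or their head.  An order isomorphism preserves atoms and tight pairs
       and, commuting with the involution, the reversal of arcs.  So a Z2-poset
       isomorphism B(G) -> B(H) yields a bijection of arcs (locale arc_iso) that
       commutes with reversal and preserves "sharing an end".
   (2) Combinatorial side.  Under such an arc bijection the out-arcs of a vertex go
       either to arcs with a common tail or to arcs with a common head, and at vertices
       of degree at least two this choice propagates along edges.  This yields an
       orientation-respecting vertex map with inverse given by the inverse arc
       bijection, i.e. a graph isomorphism.  Edges between two vertices of degree one
       (edge components) are handled separately. *)

(* The box ({v},{w}) of an arc (v,w); these are the atoms of the box complex. *)
definition arc_box :: "'a \<times> 'a \<Rightarrow> 'a set \<times> 'a set" where
  "arc_box e = ({fst e}, {snd e})"

lemma inj_arc_box: "inj arc_box"
  by (rule injI) (auto simp: arc_box_def prod_eq_iff)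

lemma box_le_arc_box [simp]: "box_le (arc_box e) (\<sigma>, \<tau>) \<longleftrightarrow> fst e \<in> \<sigma> \<and> snd e \<in> \<tau>"
  by (simp add: box_le_def arc_box_def)

lemma arc_box_swap: "arc_box (prod.swap e) = box_inv (arc_box e)"
  by (simp add: arc_box_def box_inv_def)

definition atoms :: "('a set \<times> 'a set) set \<Rightarrow> ('a set \<times> 'a set) set" where
  "atoms P = {x \<in> P. \<forall>y\<in>P. box_le y x \<longrightarrow> y = x}"

(* Two atoms form a tight pair if some element lies above both and above no other atom;
   this is expressed purely in terms of the order, hence preserved by order isomorphisms. *)
definition tight_pair ::
  "('a set \<times> 'a set) set \<Rightarrow> 'a set \<times> 'a set \<Rightarrow> 'a set \<times> 'a set \<Rightarrow> bool" where
  "tight_pair P a b \<longleftrightarrow>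
     (\<exists>y\<in>P. box_le a y \<and> box_le b y \<and> (\<forall>c\<in>atoms P. box_le c y \<longrightarrow> c = a \<or> c = b))"

definition share_end :: "'a \<times> 'a \<Rightarrow> 'a \<times> 'a \<Rightarrow> bool" where
  "share_end e1 e2 \<longleftrightarrow> fst e1 = fst e2 \<or> snd e1 = snd e2"

lemma atoms_box_complex:
  assumes "E \<subseteq> V \<times> V"
  shows "atoms (box_complex V E) = arc_box ` E"
proof
  show "atoms (box_complex V E) \<subseteq> arc_box ` E"
  proof
    fix x assume x: "x \<in> atoms (box_complex V E)"
    then obtain \<sigma> \<tau> where x_eq: "x = (\<sigma>, \<tau>)" and "\<sigma> \<noteq> {}" "\<tau> \<noteq> {}" "\<sigma> \<times> \<tau> \<subseteq> E"
      by (auto simp: atoms_def box_complex_def)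
    then obtain v w where "v \<in> \<sigma>" "w \<in> \<tau>" and vw: "(v, w) \<in> E" by blast
    have "arc_box (v, w) \<in> box_complex V E"
      using vw assms by (auto simp: box_complex_def arc_box_def)
    moreover have "box_le (arc_box (v, w)) x" using \<open>v \<in> \<sigma>\<close> \<open>w \<in> \<tau>\<close> x_eq by simp
    ultimately have "x = arc_box (v, w)" using x by (auto simp: atoms_def)
    then show "x \<in> arc_box ` E" using vw by blast
  qed
  show "arc_box ` E \<subseteq> atoms (box_complex V E)"
    using assms by (auto simp: atoms_def box_complex_def box_le_def arc_box_def subset_singleton_iff)
qed

(* Arc boxes form a tight pair iff the arcs share an end: the box ({v1,v2},{w1,w2}) lies
   above the arc (v1,w2), which must then be one of the two given arcs. *)
lemma tight_pair_box_complex: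
  assumes E: "E \<subseteq> V \<times> V" and "e1 \<in> E" "e2 \<in> E"
  shows "tight_pair (box_complex V E) (arc_box e1) (arc_box e2) \<longleftrightarrow> share_end e1 e2"
proof -
  obtain v1 w1 v2 w2 where e: "e1 = (v1, w1)" "e2 = (v2, w2)" by fastforce
  have atoms_eq: "atoms (box_complex V E) = arc_box ` E" by (rule atoms_box_complex[OF E])
  show ?thesis
  proof
    assume "tight_pair (box_complex V E) (arc_box e1) (arc_box e2)"
    then obtain \<sigma> \<tau> where y: "(\<sigma>, \<tau>) \<in> box_complex V E"
      "box_le (arc_box e1) (\<sigma>, \<tau>)" "box_le (arc_box e2) (\<sigma>, \<tau>)"
      and only: "\<forall>c\<in>atoms (box_complex V E). box_le c (\<sigma>, \<tau>) \<longrightarrow> c = arc_box e1 \<or> c = arc_box e2"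
      by (auto simp: tight_pair_def)
    have "(v1, w2) \<in> \<sigma> \<times> \<tau>" using y e by simp
    moreover have "\<sigma> \<times> \<tau> \<subseteq> E" using y by (simp add: box_complex_def)
    ultimately have "arc_box (v1, w2) \<in> atoms (box_complex V E)" using atoms_eq by blast
    then have "arc_box (v1, w2) = arc_box e1 \<or> arc_box (v1, w2) = arc_box e2"
      using only \<open>(v1, w2) \<in> \<sigma> \<times> \<tau>\<close> by simp
    then show "share_end e1 e2" using e by (auto simp: share_end_def arc_box_def)
  next
    assume "share_end e1 e2"
    then have rect: "{v1, v2} \<times> {w1, w2} = {e1, e2}" using e by (auto simp: share_end_def)
    then have "({v1, v2}, {w1, w2}) \<in> box_complex V E"
      using assms by (auto simp: box_complex_def)
    then show "tight_pair (box_complex V E) (arc_box e1) (arc_box e2)"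
      unfolding tight_pair_def atoms_eq using rect e
      by (intro bexI[of _ "({v1, v2}, {w1, w2})"]) (auto simp: arc_box_def box_le_def)
  qed
qed

locale box_order_iso =
  fixes F :: "'a set \<times> 'a set \<Rightarrow> 'b set \<times> 'b set"
    and P :: "('a set \<times> 'a set) set" and Q :: "('b set \<times> 'b set) set"
  assumes bij: "bij_betw F P Q"
    and order: "\<And>x y. x \<in> P \<Longrightarrow> y \<in> P \<Longrightarrow> box_le x y \<longleftrightarrow> box_le (F x) (F y)"
begin

lemma maps_to: "x \<in> P \<Longrightarrow> F x \<in> Q"
  using bij bij_betwE by blast

lemma onto: "z \<in> Q \<Longrightarrow> \<exists>x\<in>P. F x = z"
  using bij by (auto simp: bij_betw_def)

lemma injective: "x \<in> P \<Longrightarrow> y \<in> P \<Longrightarrow> F x = F y \<longleftrightarrow> x = y"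
  using bij by (auto simp: bij_betw_def inj_on_def)

lemma below_image:
  assumes "y \<in> P" "z \<in> Q" "box_le z (F y)"
  obtains x where "x \<in> P" "F x = z" "box_le x y"
  using assms onto order by metis

lemma atoms_iso: "bij_betw F (atoms P) (atoms Q)"
proof -
  have atom_iff: "x \<in> atoms P \<longleftrightarrow> F x \<in> atoms Q" if x: "x \<in> P" for x
  proof
    assume a: "x \<in> atoms P"
    have "z = F x" if z: "z \<in> Q" "box_le z (F x)" for z
    proof -
      obtain y where "y \<in> P" "F y = z" "box_le y x" by (rule below_image[OF x z])
      then show ?thesis using a by (auto simp: atoms_def)
    qed
    then show "F x \<in> atoms Q" using x maps_to by (auto simp: atoms_def)
  next
    assume a: "F x \<in> atoms Q"
    have "y = x" if "y \<in> P" "box_le y x" for y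
      using a that x maps_to[OF that(1)] order[OF that(1) x] injective[OF that(1) x]
      by (auto simp: atoms_def)
    then show "x \<in> atoms P" using x by (auto simp: atoms_def)
  qed
  have atoms_sub: "atoms P \<subseteq> P" "atoms Q \<subseteq> Q" by (auto simp: atoms_def)
  have "F ` atoms P = atoms Q"
  proof
    show "F ` atoms P \<subseteq> atoms Q" using atom_iff atoms_sub by blast
    show "atoms Q \<subseteq> F ` atoms P"
    proof
      fix z assume "z \<in> atoms Q"
      moreover then obtain x where "x \<in> P" "F x = z" using onto atoms_sub by blast
      ultimately show "z \<in> F ` atoms P" using atom_iff by blast
    qed
  qed
  moreover have "inj_on F (atoms P)"
    using bij atoms_sub by (auto simp: bij_betw_def intro: inj_on_subset)
  ultimately show ?thesis by (simp add: bij_betw_def)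
qed

lemma tight_pair_iso:
  assumes a: "a \<in> P" and b: "b \<in> P"
  shows "tight_pair Q (F a) (F b) \<longleftrightarrow> tight_pair P a b"
proof -
  have atoms_Q: "atoms Q = F ` atoms P" and atoms_P: "atoms P \<subseteq> P"
    using atoms_iso by (auto simp: bij_betw_def atoms_def)
  have only_iff: "(\<forall>c\<in>atoms Q. box_le c (F y) \<longrightarrow> c = F a \<or> c = F b)
      \<longleftrightarrow> (\<forall>c\<in>atoms P. box_le c y \<longrightarrow> c = a \<or> c = b)" if y: "y \<in> P" for y
  proof -
    have "(box_le (F c) (F y) \<longleftrightarrow> box_le c y) \<and> (F c = F a \<longleftrightarrow> c = a) \<and> (F c = F b \<longleftrightarrow> c = b)"
      if "c \<in> atoms P" for c
      using that atoms_P y a b order injective by (metis subsetD)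
    then show ?thesis unfolding atoms_Q ball_simps(9) by (intro ball_cong) auto
  qed
  have ex_Q: "(\<exists>z\<in>Q. R z) \<longleftrightarrow> (\<exists>y\<in>P. R (F y))" for R
    using onto maps_to by blast
  show ?thesis
    unfolding tight_pair_def ex_Q
    by (intro bex_cong refl) (metis order a b only_iff)
qed

lemma arc_bijection:
  assumes atoms_P: "atoms P = arc_box ` E" and atoms_Q: "atoms Q = arc_box ` E'"
  defines "\<phi> \<equiv> inv_into E' arc_box \<circ> F \<circ> arc_box"
  shows "bij_betw \<phi> E E'" and "\<And>e. e \<in> E \<Longrightarrow> arc_box (\<phi> e) = F (arc_box e)"
proof -
  have box_E: "bij_betw arc_box E (atoms P)" and box_E': "bij_betw arc_box E' (atoms Q)"
    unfolding atoms_P atoms_Q using inj_arc_box by (auto simp: bij_betw_def intro: inj_on_subset)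
  show "bij_betw \<phi> E E'"
    unfolding \<phi>_def o_assoc[symmetric]
    using bij_betw_trans[OF bij_betw_trans[OF box_E atoms_iso] bij_betw_inv_into[OF box_E']] .
  fix e assume "e \<in> E"
  then have "F (arc_box e) \<in> arc_box ` E'"
    using atoms_iso atoms_P atoms_Q by (auto dest: bij_betwE)
  then show "arc_box (\<phi> e) = F (arc_box e)" by (simp add: \<phi>_def f_inv_into_f)
qed

end

definition branching :: "('a \<times> 'a) set \<Rightarrow> 'a \<Rightarrow> bool" where
  "branching E v \<longleftrightarrow> (\<exists>w1 w2. (v, w1) \<in> E \<and> (v, w2) \<in> E \<and> w1 \<noteq> w2)"

(* This is what a
   Z2-poset isomorphism of box complexes induces on atoms. *)
locale arc_iso =
  fixes E :: "('a \<times> 'a) set" and E' :: "('b \<times> 'b) set" and \<phi> :: "'a \<times> 'a \<Rightarrow> 'b \<times> 'b"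
  assumes sym_E: "sym E"
    and bij: "bij_betw \<phi> E E'"
    and swap: "e \<in> E \<Longrightarrow> \<phi> (prod.swap e) = prod.swap (\<phi> e)"
    and share_end_iff: "e1 \<in> E \<Longrightarrow> e2 \<in> E \<Longrightarrow> share_end (\<phi> e1) (\<phi> e2) \<longleftrightarrow> share_end e1 e2"
begin

lemma maps_to: "e \<in> E \<Longrightarrow> \<phi> e \<in> E'"
  using bij bij_betwE by blast

lemma injective: "e1 \<in> E \<Longrightarrow> e2 \<in> E \<Longrightarrow> \<phi> e1 = \<phi> e2 \<longleftrightarrow> e1 = e2"
  using bij by (auto simp: bij_betw_def inj_on_def)

lemma onto: "e' \<in> E' \<Longrightarrow> \<exists>e\<in>E. \<phi> e = e'"
  using bij by (auto simp: bij_betw_def)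

lemma edge_sym: "(v, w) \<in> E \<Longrightarrow> (w, v) \<in> E"
  using sym_E by (auto simp: sym_def)

(* The target arc set is symmetric as well, since every arc there is an image. *)
lemma sym_E': "sym E'"
proof (rule symI)
  fix a b assume "(a, b) \<in> E'"
  then obtain e where "e \<in> E" "\<phi> e = (a, b)" using onto by blast
  then show "(b, a) \<in> E'"
    using swap maps_to edge_sym by (metis prod.swap_def fst_conv snd_conv prod.collapse)
qed

lemma swap_fst: "(v, w) \<in> E \<Longrightarrow> fst (\<phi> (w, v)) = snd (\<phi> (v, w))"
  and swap_snd: "(v, w) \<in> E \<Longrightarrow> snd (\<phi> (w, v)) = fst (\<phi> (v, w))"
  using swap[of "(v, w)"] by simp_all

lemma share_end_image:
  "e1 \<in> E \<Longrightarrow> e2 \<in> E \<Longrightarrow>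
     (fst (\<phi> e1) = fst (\<phi> e2) \<or> snd (\<phi> e1) = snd (\<phi> e2)) \<longleftrightarrow> (fst e1 = fst e2 \<or> snd e1 = snd e2)"
  using share_end_iff by (simp add: share_end_def)

definition tails_agree :: "'a \<Rightarrow> bool" where
  "tails_agree v \<longleftrightarrow> (\<forall>w1 w2. (v, w1) \<in> E \<longrightarrow> (v, w2) \<in> E \<longrightarrow> fst (\<phi> (v, w1)) = fst (\<phi> (v, w2)))"

definition heads_agree :: "'a \<Rightarrow> bool" where
  "heads_agree v \<longleftrightarrow> (\<forall>w1 w2. (v, w1) \<in> E \<longrightarrow> (v, w2) \<in> E \<longrightarrow> snd (\<phi> (v, w1)) = snd (\<phi> (v, w2)))"

(* The images of the out-arcs of a vertex pairwise share an end; hence they all share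
   the tail or all share the head: two images with different tails force a common head c,
   and any third image, sharing an end with both, must have head c too. *)
lemma tails_or_heads_agree: "tails_agree v \<or> heads_agree v"
proof (rule disjCI)
  assume "\<not> heads_agree v"
  then obtain w1 w2 where w: "(v, w1) \<in> E" "(v, w2) \<in> E" and
    heads: "snd (\<phi> (v, w1)) \<noteq> snd (\<phi> (v, w2))"
    by (auto simp: heads_agree_def)
  then have tails: "fst (\<phi> (v, w1)) = fst (\<phi> (v, w2))"
    using share_end_image[of "(v, w1)" "(v, w2)"] by simp
  have "fst (\<phi> (v, w)) = fst (\<phi> (v, w1))" if "(v, w) \<in> E" for w
    using share_end_image[of "(v, w)" "(v, w1)"] share_end_image[of "(v, w)" "(v, w2)"]
      that w heads tails by auto
  then show "tails_agree v" by (auto simp: tails_agree_def)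
qed

lemma agree_iff_not_branching: "tails_agree v \<and> heads_agree v \<longleftrightarrow> \<not> branching E v"
proof
  assume agree: "tails_agree v \<and> heads_agree v"
  show "\<not> branching E v"
  proof
    assume "branching E v"
    then obtain w1 w2 where w: "(v, w1) \<in> E" "(v, w2) \<in> E" "w1 \<noteq> w2"
      by (auto simp: branching_def)
    have "fst (\<phi> (v, w1)) = fst (\<phi> (v, w2))" "snd (\<phi> (v, w1)) = snd (\<phi> (v, w2))"
      using agree w unfolding tails_agree_def heads_agree_def by blast+
    then have "\<phi> (v, w1) = \<phi> (v, w2)" by (rule prod_eqI)
    then show False using w injective by blast
  qed
next
  assume "\<not> branching E v"
  then have "w1 = w2" if "(v, w1) \<in> E" "(v, w2) \<in> E" for w1 w2
    using that unfolding branching_def by blast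
  then show "tails_agree v \<and> heads_agree v"
    unfolding tails_agree_def heads_agree_def by blast
qed

(* At a branching vertex v with agreeing tails, the tails also agree at every neighbour w:
   for an arc (z,w) with z ~= v, pick an out-arc (v,w') with w' ~= w; the image of (z,w)
   shares an end with that of (v,w) but not with that of (v,w'), so it has the head of
   the image of (v,w), i.e. the image of (w,z) has the tail of the image of (w,v). *)
lemma tails_agree_spreads:
  assumes v: "branching E v" "tails_agree v" and vw: "(v, w) \<in> E"
  shows "tails_agree w"
proof -
  obtain w' where w': "(v, w') \<in> E" "w' \<noteq> w"
    using v(1) by (auto simp: branching_def)
  have key: "fst (\<phi> (w, z)) = fst (\<phi> (w, v))" if wz: "(w, z) \<in> E" for z
  proof (cases "z = v")
    case False
    have zw: "(z, w) \<in> E" using edge_sym wz by blast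
    have "fst (\<phi> (v, w')) = fst (\<phi> (v, w))"
      using v(2) w'(1) vw unfolding tails_agree_def by blast
    moreover have "fst (\<phi> (v, w)) = fst (\<phi> (z, w)) \<or> snd (\<phi> (v, w)) = snd (\<phi> (z, w))"
      using share_end_image[of "(v, w)" "(z, w)"] vw zw by simp
    moreover have "\<not> (fst (\<phi> (v, w')) = fst (\<phi> (z, w)) \<or> snd (\<phi> (v, w')) = snd (\<phi> (z, w)))"
      using share_end_image[of "(v, w')" "(z, w)"] w' zw False by simp
    ultimately have "snd (\<phi> (z, w)) = snd (\<phi> (v, w))" by metis
    then show ?thesis using swap_fst[OF zw] swap_fst[OF vw] by simp
  qed simp
  then show ?thesis unfolding tails_agree_def by metis
qed

(* Reversing all arcs of the target again gives an arc bijection of the same kind; it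
   exchanges the roles of tails and heads. *)
lemma arc_iso_reversed: "arc_iso E E' (prod.swap \<circ> \<phi>)"
proof
  show "sym E" by (rule sym_E)
  have "bij_betw prod.swap E' E'"
    by (rule bij_betw_byWitness[where f' = prod.swap]) (use sym_E' in \<open>auto simp: sym_def\<close>)
  then show "bij_betw (prod.swap \<circ> \<phi>) E E'" by (rule bij_betw_trans[OF bij])
  show "(prod.swap \<circ> \<phi>) (prod.swap e) = prod.swap ((prod.swap \<circ> \<phi>) e)" if "e \<in> E" for e
    using swap[OF that] by simp
  have "share_end (prod.swap a) (prod.swap b) \<longleftrightarrow> share_end a b" for a b :: "'b \<times> 'b"
    by (auto simp: share_end_def)
  then show "share_end ((prod.swap \<circ> \<phi>) e1) ((prod.swap \<circ> \<phi>) e2) \<longleftrightarrow> share_end e1 e2"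
    if "e1 \<in> E" "e2 \<in> E" for e1 e2
    using share_end_iff[OF that] by simp
qed

(* The head version of the propagation lemma, by reversing the target arcs. *)
lemma heads_agree_spreads:
  assumes "branching E v" "heads_agree v" and "(v, w) \<in> E"
  shows "heads_agree w"
proof -
  interpret reversed: arc_iso E E' "prod.swap \<circ> \<phi>" by (rule arc_iso_reversed)
  have "reversed.tails_agree u \<longleftrightarrow> heads_agree u" for u
    by (simp add: reversed.tails_agree_def heads_agree_def)
  then show ?thesis using reversed.tails_agree_spreads assms by blast
qed

(* Since
   tails agree trivially at non-branching vertices, this is constant along edges, and it
   fails only if heads agree at v. *)
definition keeps_orientation :: "'a \<Rightarrow> bool" where
  "keeps_orientation v \<longleftrightarrow> (\<forall>u. u = v \<or> (v, u) \<in> E \<longrightarrow> tails_agree u)"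

lemma keeps_orientation_tails: "keeps_orientation v \<Longrightarrow> tails_agree v"
  by (simp add: keeps_orientation_def)

(* If the orientation is not kept at v, some branching vertex in the closed neighbourhood
   of v has agreeing heads, and this propagates to v. *)
lemma reverses_orientation_heads:
  assumes "\<not> keeps_orientation v"
  shows "heads_agree v"
proof -
  obtain u where u: "u = v \<or> (v, u) \<in> E" and "\<not> tails_agree u"
    using assms by (auto simp: keeps_orientation_def)
  then have "heads_agree u" "branching E u"
    using tails_or_heads_agree agree_iff_not_branching by blast+
  with u show ?thesis using heads_agree_spreads edge_sym by blast
qed

(* A neighbour u of w with disagreeing tails is
   branching with agreeing heads, so w has agreeing heads and tails, hence is not
   branching, forcing u = v, where tails agree. *)
lemma keeps_orientation_along_edge:
  assumes vw: "(v, w) \<in> E" and keeps: "keeps_orientation v"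
  shows "keeps_orientation w"
proof -
  have tails_w: "tails_agree w" using keeps vw by (simp add: keeps_orientation_def)
  have "tails_agree u" if wu: "(w, u) \<in> E" for u
  proof (rule ccontr)
    assume "\<not> tails_agree u"
    then have "heads_agree u" "branching E u"
      using tails_or_heads_agree agree_iff_not_branching by blast+
    then have "heads_agree w" using heads_agree_spreads edge_sym[OF wu] by blast
    with tails_w have "\<not> branching E w" using agree_iff_not_branching by blast
    then have "u = v" using wu edge_sym[OF vw] unfolding branching_def by blast
    then show False using \<open>\<not> tails_agree u\<close> keeps_orientation_tails[OF keeps] by blast
  qed
  then show ?thesis using tails_w by (auto simp: keeps_orientation_def)
qed

lemma keeps_orientation_edge_iff: "(v, w) \<in> E \<Longrightarrow> keeps_orientation v \<longleftrightarrow> keeps_orientation w"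
  using keeps_orientation_along_edge edge_sym by blast

(* The vertex map: the common tail (resp. head) of the images of the out-arcs of v. *)
definition vertex_map :: "'a \<Rightarrow> 'b" where
  "vertex_map v = (let w = SOME w. (v, w) \<in> E in
     if keeps_orientation v then fst (\<phi> (v, w)) else snd (\<phi> (v, w)))"

lemma vertex_map_eq:
  assumes vw: "(v, w) \<in> E"
  shows "vertex_map v = (if keeps_orientation v then fst (\<phi> (v, w)) else snd (\<phi> (v, w)))"
proof -
  define w0 where "w0 = (SOME w. (v, w) \<in> E)"
  have w0: "(v, w0) \<in> E" unfolding w0_def using vw by (rule someI)
  show ?thesis
  proof (cases "keeps_orientation v")
    case True
    then have "fst (\<phi> (v, w0)) = fst (\<phi> (v, w))"
      using keeps_orientation_tails w0 vw unfolding tails_agree_def by blast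
    then show ?thesis using True by (simp add: vertex_map_def w0_def[symmetric])
  next
    case False
    then have "snd (\<phi> (v, w0)) = snd (\<phi> (v, w))"
      using reverses_orientation_heads w0 vw unfolding heads_agree_def by blast
    then show ?thesis using False by (simp add: vertex_map_def w0_def[symmetric])
  qed
qed

lemma arc_image:
  assumes vw: "(v, w) \<in> E"
  shows "\<phi> (v, w) = (if keeps_orientation v then (vertex_map v, vertex_map w)
                                           else (vertex_map w, vertex_map v))"
  using vertex_map_eq[OF vw] vertex_map_eq[OF edge_sym[OF vw]] keeps_orientation_edge_iff[OF vw]
    swap_fst[OF vw] swap_snd[OF vw] by (simp add: prod_eq_iff)

lemma vertex_map_edge: "(v, w) \<in> E \<Longrightarrow> (vertex_map v, vertex_map w) \<in> E'"
  using arc_image maps_to sym_E' by (metis symD)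

lemma keeps_orientation_if_not_branching:
  assumes vw: "(v, w) \<in> E" and "\<not> branching E v" "\<not> branching E w"
  shows "keeps_orientation v"
proof -
  have nbr: "u = w" if "(v, u) \<in> E" for u using that vw assms(2) unfolding branching_def by blast
  have "tails_agree v" "tails_agree w" using assms(2,3) agree_iff_not_branching by blast+
  with nbr show ?thesis unfolding keeps_orientation_def by blast
qed

(* An edge between two non-branching vertices is mapped to such an edge: an arc leaving
   the image tail is the image of an arc sharing an end with (v,w), hence of (v,w) itself. *)
lemma not_branching_image:
  assumes vw: "(v, w) \<in> E" and v: "\<not> branching E v" and w: "\<not> branching E w"
  shows "\<not> branching E' (fst (\<phi> (v, w)))"
proof -
  have "z = snd (\<phi> (v, w))" if az: "(fst (\<phi> (v, w)), z) \<in> E'" for z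
  proof -
    obtain x y where xy: "(x, y) \<in> E" "\<phi> (x, y) = (fst (\<phi> (v, w)), z)"
      using onto[OF az] by auto
    then have "x = v \<or> y = w" using share_end_image[OF xy(1) vw] by simp
    then have "y = w" using xy(1) vw v unfolding branching_def by blast
    then have "x = v" using edge_sym[OF xy(1)] edge_sym[OF vw] w unfolding branching_def by blast
    then show ?thesis using xy(2) \<open>y = w\<close> by (metis snd_conv)
  qed
  then show ?thesis unfolding branching_def by blast
qed

lemma arc_iso_inverse: "arc_iso E' E (inv_into E \<phi>)"
proof
  show "sym E'" by (rule sym_E')
  show "bij_betw (inv_into E \<phi>) E' E" by (rule bij_betw_inv_into[OF bij])
  have inv_phi: "inv_into E \<phi> (\<phi> e) = e" if "e \<in> E" for e
    using bij that by (simp add: bij_betw_def)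
  fix e1 e2 assume e1: "e1 \<in> E'" and e2: "e2 \<in> E'"
  obtain d1 d2 where d: "d1 \<in> E" "d2 \<in> E" "e1 = \<phi> d1" "e2 = \<phi> d2" using onto e1 e2 by blast
  have "prod.swap d1 \<in> E" using d(1) edge_sym by (cases d1) simp
  then have "inv_into E \<phi> (prod.swap e1) = prod.swap d1"
    using swap[OF d(1)] d(3) inv_phi by metis
  then show "inv_into E \<phi> (prod.swap e1) = prod.swap (inv_into E \<phi> e1)"
    using inv_phi d(1,3) by simp
  show "share_end (inv_into E \<phi> e1) (inv_into E \<phi> e2) \<longleftrightarrow> share_end e1 e2"
    using share_end_iff[OF d(1,2)] inv_phi d by simp
qed

abbreviation inverse_vertex_map :: "'b \<Rightarrow> 'a" where
  "inverse_vertex_map \<equiv> arc_iso.vertex_map E' (inv_into E \<phi>)"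

lemma round_trip_on_edge:
  assumes vw: "(v, w) \<in> E"
  shows "(inverse_vertex_map (vertex_map v) = v \<and> inverse_vertex_map (vertex_map w) = w) \<or>
         (inverse_vertex_map (vertex_map v) = w \<and> inverse_vertex_map (vertex_map w) = v)"
proof -
  interpret inv: arc_iso E' E "inv_into E \<phi>" by (rule arc_iso_inverse)
  obtain a b where ab: "\<phi> (v, w) = (a, b)" and
    ends: "(a = vertex_map v \<and> b = vertex_map w) \<or> (a = vertex_map w \<and> b = vertex_map v)"
    using arc_image[OF vw] by (auto split: if_splits)
  have "(a, b) \<in> E'" using maps_to[OF vw] ab by simp
  moreover have "inv_into E \<phi> (a, b) = (v, w)" using bij vw ab by (metis bij_betw_inv_into_left)
  ultimately show ?thesis using inv.arc_image[of a b] ends by (auto split: if_splits)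
qed

(* At a branching vertex this follows
   from two edges with distinct other ends, next to a branching vertex from one such
   edge; an edge between two non-branching vertices is an edge component, where both
   arc bijections keep the orientation. *)
lemma vertex_map_round_trip:
  assumes vw0: "(v, w0) \<in> E"
  shows "inverse_vertex_map (vertex_map v) = v"
proof -
  interpret inv: arc_iso E' E "inv_into E \<phi>" by (rule arc_iso_inverse)
  have branching_fixed: "inverse_vertex_map (vertex_map u) = u" if u: "branching E u" for u
  proof -
    obtain w1 w2 where "(u, w1) \<in> E" "(u, w2) \<in> E" "w1 \<noteq> w2"
      using u unfolding branching_def by blast
    then show ?thesis using round_trip_on_edge by metis
  qed
  consider "branching E v" | "branching E w0" | "\<not> branching E v" "\<not> branching E w0" by blast
  then show ?thesis
  proof cases
    case 1
    then show ?thesis by (rule branching_fixed)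
  next
    case 2
    then show ?thesis using branching_fixed round_trip_on_edge[OF vw0] by metis
  next
    case 3
    have image: "\<phi> (v, w0) = (vertex_map v, vertex_map w0)"
      using arc_image[OF vw0] keeps_orientation_if_not_branching[OF vw0 3] by simp
    have image_edge: "(vertex_map v, vertex_map w0) \<in> E'" using maps_to[OF vw0] image by simp
    have "\<not> branching E' (vertex_map v)"
      using not_branching_image[OF vw0 3] image by simp
    moreover have "\<not> branching E' (vertex_map w0)"
      using not_branching_image[OF edge_sym[OF vw0] 3(2,1)] swap_fst[OF vw0] image by simp
    ultimately have "inv_into E \<phi> (vertex_map v, vertex_map w0) =
        (inverse_vertex_map (vertex_map v), inverse_vertex_map (vertex_map w0))"
      using inv.arc_image[OF image_edge] inv.keeps_orientation_if_not_branching[OF image_edge]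
      by simp
    then show ?thesis using bij vw0 image by (metis bij_betw_inv_into_left fst_conv)
  qed
qed

theorem graph_iso_of_arc_iso:
  assumes E: "E \<subseteq> V \<times> V" and E': "E' \<subseteq> V' \<times> V'"
    and no_iso: "no_isolated V E" and no_iso': "no_isolated V' E'"
  shows "graph_iso V E V' E'"
proof -
  interpret inv: arc_iso E' E "inv_into E \<phi>" by (rule arc_iso_inverse)
  have has_nbr: "\<exists>w. (v, w) \<in> E" if "v \<in> V" for v
    using no_iso that by (auto simp: no_isolated_def nbhd_def)
  have round_trip: "inverse_vertex_map (vertex_map v) = v" if "v \<in> V" for v
    using has_nbr[OF that] vertex_map_round_trip by blast
  have "vertex_map ` V \<subseteq> V'"
    using has_nbr vertex_map_edge E' by blast
  moreover have "V' \<subseteq> vertex_map ` V"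
  proof
    fix a assume "a \<in> V'"
    then obtain b where "(a, b) \<in> E'" using no_iso' by (auto simp: no_isolated_def nbhd_def)
    then obtain v w where vw: "(v, w) \<in> E" "\<phi> (v, w) = (a, b)" using onto by fastforce
    then have "a = vertex_map v \<or> a = vertex_map w" using arc_image[OF vw(1)] by (auto split: if_splits)
    then show "a \<in> vertex_map ` V" using vw(1) E by blast
  qed
  moreover have "inj_on vertex_map V" using round_trip by (rule inj_on_inverseI)
  moreover have "(v, w) \<in> E \<longleftrightarrow> (vertex_map v, vertex_map w) \<in> E'"
    if "v \<in> V" "w \<in> V" for v w
    using vertex_map_edge inv.vertex_map_edge round_trip that by metis
  ultimately show ?thesis unfolding graph_iso_def bij_betw_def by blast
qed

end

definition box_image :: "('a \<Rightarrow> 'b) \<Rightarrow> 'a set \<times> 'a set \<Rightarrow> 'b set \<times> 'b set" where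
  "box_image f x = (f ` fst x, f ` snd x)"

lemma box_image_mem:
  assumes "f ` V \<subseteq> V'" and "\<And>v w. (v, w) \<in> E \<Longrightarrow> (f v, f w) \<in> E'"
    and "x \<in> box_complex V E"
  shows "box_image f x \<in> box_complex V' E'"
proof -
  obtain \<sigma> \<tau> where x: "x = (\<sigma>, \<tau>)" "\<sigma> \<subseteq> V" "\<tau> \<subseteq> V" "\<sigma> \<noteq> {}" "\<tau> \<noteq> {}" "\<sigma> \<times> \<tau> \<subseteq> E"
    using assms(3) by (auto simp: box_complex_def)
  moreover have "f ` \<sigma> \<subseteq> V'" "f ` \<tau> \<subseteq> V'" using x(2,3) assms(1) by blast+
  moreover have "f ` \<sigma> \<times> f ` \<tau> \<subseteq> E'" using x(6) assms(2) by blast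
  ultimately show ?thesis by (simp add: box_image_def box_complex_def)
qed

lemma box_image_mono: "box_le x y \<Longrightarrow> box_le (box_image f x) (box_image f y)"
  by (auto simp: box_le_def box_image_def)

lemma box_image_inv: "box_image f (box_inv x) = box_inv (box_image f x)"
  by (simp add: box_image_def box_inv_def)

lemma box_image_cancel:
  assumes "\<And>v. v \<in> V \<Longrightarrow> g (f v) = v" and "x \<in> box_complex V E"
  shows "box_image g (box_image f x) = x"
proof -
  have cancel: "g ` f ` A = A" if "A \<subseteq> V" for A
    using assms(1) that by (force simp: image_image)
  obtain \<sigma> \<tau> where "x = (\<sigma>, \<tau>)" "\<sigma> \<subseteq> V" "\<tau> \<subseteq> V"
    using assms(2) by (auto simp: box_complex_def)
  then show ?thesis by (simp add: box_image_def cancel)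
qed

lemma z2_poset_iso_of_inverse_homs:
  assumes fV: "f ` V \<subseteq> V'" and gV: "g ` V' \<subseteq> V"
    and gf: "\<And>v. v \<in> V \<Longrightarrow> g (f v) = v" and fg: "\<And>v. v \<in> V' \<Longrightarrow> f (g v) = v"
    and f_edges: "\<And>v w. (v, w) \<in> E \<Longrightarrow> (f v, f w) \<in> E'"
    and g_edges: "\<And>v w. (v, w) \<in> E' \<Longrightarrow> (g v, g w) \<in> E"
  shows "z2_poset_iso (box_complex V E) (box_complex V' E')"
proof -
  let ?F = "box_image f" and ?G = "box_image g"
  let ?P = "box_complex V E" and ?Q = "box_complex V' E'"
  have F_mem: "\<And>x. x \<in> ?P \<Longrightarrow> ?F x \<in> ?Q" using box_image_mem[OF fV] f_edges by blast
  have G_mem: "\<And>y. y \<in> ?Q \<Longrightarrow> ?G y \<in> ?P" using box_image_mem[OF gV] g_edges by blast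
  have GF: "\<And>x. x \<in> ?P \<Longrightarrow> ?G (?F x) = x" using box_image_cancel gf by blast
  have FG: "\<And>y. y \<in> ?Q \<Longrightarrow> ?F (?G y) = y" using box_image_cancel fg by blast
  have "bij_betw ?F ?P ?Q"
    by (rule bij_betw_byWitness[where f' = ?G]) (use F_mem G_mem GF FG in auto)
  moreover have "box_le x y \<longleftrightarrow> box_le (?F x) (?F y)" if "x \<in> ?P" "y \<in> ?P" for x y
    using box_image_mono[of x y f] box_image_mono[of "?F x" "?F y" g] GF that by metis
  ultimately show ?thesis
    unfolding z2_poset_iso_def using box_image_inv by blast
qed

(* Forward direction: a graph isomorphism and its inverse are mutually inverse homomorphisms. *)
lemma z2_poset_iso_of_graph_iso:
  assumes iso: "graph_iso V E V' E'" and E: "E \<subseteq> V \<times> V" and E': "E' \<subseteq> V' \<times> V'"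
  shows "z2_poset_iso (box_complex V E) (box_complex V' E')"
proof -
  obtain f where bij: "bij_betw f V V'"
    and edges: "\<And>v w. v \<in> V \<Longrightarrow> w \<in> V \<Longrightarrow> (v, w) \<in> E \<longleftrightarrow> (f v, f w) \<in> E'"
    using iso by (auto simp: graph_iso_def)
  have fV: "f ` V = V'" using bij by (simp add: bij_betw_def)
  define g where "g = inv_into V f"
  have gf: "g (f v) = v" if "v \<in> V" for v
    using bij that unfolding g_def bij_betw_def by (simp add: inv_into_f_f)
  have fg: "f (g v) = v" if "v \<in> V'" for v
    using fV that unfolding g_def by (simp add: f_inv_into_f)
  have gV: "g ` V' \<subseteq> V"
    using fV unfolding g_def by (auto intro: inv_into_into)
  have f_edges: "(f v, f w) \<in> E'" if "(v, w) \<in> E" for v w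
    using edges[of v w] that E by blast
  have g_edges: "(g v, g w) \<in> E" if vw: "(v, w) \<in> E'" for v w
  proof -
    have "v \<in> V'" "w \<in> V'" using vw E' by auto
    then show ?thesis using edges[of "g v" "g w"] gV fg vw by auto
  qed
  show ?thesis
    using z2_poset_iso_of_inverse_homs[OF equalityD1[OF fV] gV gf fg f_edges g_edges] .
qed

lemma arc_iso_of_z2_poset_iso:
  assumes G: "is_graph V E" and G': "is_graph V' E'"
    and iso: "z2_poset_iso (box_complex V E) (box_complex V' E')"
  shows "\<exists>\<phi>. arc_iso E E' \<phi>"
proof -
  let ?P = "box_complex V E" and ?Q = "box_complex V' E'"
  obtain F where bij: "bij_betw F ?P ?Q"
    and order: "\<forall>x\<in>?P. \<forall>y\<in>?P. box_le x y \<longleftrightarrow> box_le (F x) (F y)"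
    and inv: "\<forall>x\<in>?P. F (box_inv x) = box_inv (F x)"
    using iso by (auto simp: z2_poset_iso_def)
  interpret box_order_iso F ?P ?Q using bij order by unfold_locales auto
  have E: "E \<subseteq> V \<times> V" "sym E" and E': "E' \<subseteq> V' \<times> V'" using G G' by (auto simp: is_graph_def)
  have atoms_P: "atoms ?P = arc_box ` E" and atoms_Q: "atoms ?Q = arc_box ` E'"
    using atoms_box_complex E(1) E' by blast+
  have box_P: "arc_box e \<in> ?P" if "e \<in> E" for e
    using that atoms_P by (auto simp: atoms_def)
  define \<phi> where "\<phi> = inv_into E' arc_box \<circ> F \<circ> arc_box"
  have bij_\<phi>: "bij_betw \<phi> E E'" and box_\<phi>: "\<And>e. e \<in> E \<Longrightarrow> arc_box (\<phi> e) = F (arc_box e)"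
    using arc_bijection[OF atoms_P atoms_Q] unfolding \<phi>_def by blast+
  have "arc_iso E E' \<phi>"
  proof
    show "sym E" "bij_betw \<phi> E E'" by (fact E(2), fact bij_\<phi>)
    fix e e1 e2 assume e: "e \<in> E" and e1: "e1 \<in> E" and e2: "e2 \<in> E"
    have "prod.swap e \<in> E" using e E(2) by (cases e) (simp add: sym_def)
    then have "arc_box (\<phi> (prod.swap e)) = arc_box (prod.swap (\<phi> e))"
      using box_\<phi> e inv box_P arc_box_swap by metis
    then show "\<phi> (prod.swap e) = prod.swap (\<phi> e)" by (rule injD[OF inj_arc_box])
    have "\<phi> e1 \<in> E'" "\<phi> e2 \<in> E'" using bij_\<phi> e1 e2 by (auto dest: bij_betwE)
    then have "share_end (\<phi> e1) (\<phi> e2) \<longleftrightarrow> tight_pair ?Q (F (arc_box e1)) (F (arc_box e2))"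
      using tight_pair_box_complex[OF E'] box_\<phi> e1 e2 by metis
    also have "\<dots> \<longleftrightarrow> share_end e1 e2"
      using tight_pair_iso box_P tight_pair_box_complex[OF E(1)] e1 e2 by metis
    finally show "share_end (\<phi> e1) (\<phi> e2) \<longleftrightarrow> share_end e1 e2" .
  qed
  then show ?thesis by blast
qed

theorem theorem1p1:
  fixes V :: "'a set" and E :: "('a \<times> 'a) set"
    and V' :: "'b set" and E' :: "('b \<times> 'b) set"
  assumes "is_graph V E" and "no_isolated V E"
    and "is_graph V' E'" and "no_isolated V' E'"
  shows "graph_iso V E V' E' \<longleftrightarrow> z2_poset_iso (box_complex V E) (box_complex V' E')"
proof
  have E: "E \<subseteq> V \<times> V" and E': "E' \<subseteq> V' \<times> V'"
    using assms(1,3) by (auto simp: is_graph_def)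
  show "graph_iso V E V' E' \<Longrightarrow> z2_poset_iso (box_complex V E) (box_complex V' E')"
    using z2_poset_iso_of_graph_iso E E' by blast
  assume "z2_poset_iso (box_complex V E) (box_complex V' E')"
  then obtain \<phi> where "arc_iso E E' \<phi>" using arc_iso_of_z2_poset_iso assms(1,3) by blast
  then show "graph_iso V E V' E'" using arc_iso.graph_iso_of_arc_iso E E' assms(2,4) by blast
qed

end
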